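(* Let $r>0$ and $k\geq1$ be an integer. Let $\mathcal N=(G,\beta,r)$ be a multi-path network of length $k$ (nodes $v_0,\dots,v_k$, every arc joins two consecutive nodes $v_{i-1},v_i$), and let $s=v_0$, $t=v_k$. Let $(\pi,f)$ be a potential-based $(s,t)$-flow of value $d>0$ in $\mathcal N$. If $\pi\in[0,\bar\pi]^V$ for some $\bar\pi>0$, then $$U^{\mathcal N}_{s,t}\geq \frac{d}{\sqrt[r]{\bar\pi}}.$$
   Context: A potential-based flow network $\mathcal N=(G,\beta,r)$ consists of a weakly connected directed multigraph $G=(V,A)$ without loops, resistances $\beta\in\mathbb{R}^A_{>0}$ and a degree $r>0$. For a balanced vector $b\in\mathbb{R}^V$ (i.e. $\sum_v b_v=0$), a potential-based $b$-transshipment is a pair $(\pi,f)\in\mathbb{R}^V\times\mathbb{R}^A$ with $\pi_u-\pi_v=\beta_a\,\mathrm{sign}(f_a)|f_a|^r$ for every arc $a=(u,v)$ and $\sum_{a\in\delta^+(v)}f_a-\sum_{a\in\delta^-(v)}f_a=b_v$ for all $v\in V$ ($\delta^+(v)$, $\delta^-(v)$: arcs leaving, resp. entering, $v$). A potential-based $(s,t)$-flow of value $d$ is a potential-based $b$-transshipment with $b=d(\chi_s-\chi_t)$, $\chi_v$ the unit vector of $v$. Such pairs exist for every balanced $b$ and are unique up to adding a constant to $\pi$; let $\pi^{\mathcal N}(b)$ be the potential normalized to have minimum entry $0$. The effective resistance is $R^{\mathcal N}_{s,t}=\pi^{\mathcal N}_s(\chi_s-\chi_t)-\pi^{\mathcal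 N}_t(\chi_s-\chi_t)$ and the effective conductance is $U^{\mathcal N}_{s,t}=(R^{\mathcal N}_{s,t})^{-1/r}$. *)

theory Defs
  imports Complex_Main
begin

text \<open>A potential-based flow network: vertex set V, arc set A of a directed multigraph
  (arc a goes from tail a to head a), resistances beta, degree r.\<close>

definition pb_network ::
  "'v set \<Rightarrow> 'e set \<Rightarrow> ('e \<Rightarrow> 'v) \<Rightarrow> ('e \<Rightarrow> 'v) \<Rightarrow> ('e \<Rightarrow> real) \<Rightarrow> real \<Rightarrow> bool" where
  "pb_network V A tail head beta r \<longleftrightarrow>
     finite V \<and> V \<noteq> {} \<and> finite A \<and>
     (\<forall>a\<in>A. tail a \<in> V \<and> head a \<in> V \<and> tail a \<noteq> head a) \<and>
     (\<forall>a\<in>A. beta a > 0) \<and> r > 0 \<and>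
     (\<forall>u\<in>V. \<forall>v\<in>V. (u, v) \<in> ({(tail a, head a) | a. a \<in> A} \<union> {(head a, tail a) | a. a \<in> A})\<^sup>*)"

definition balanced :: "'v set \<Rightarrow> ('v \<Rightarrow> real) \<Rightarrow> bool" where
  "balanced V b \<longleftrightarrow> (\<Sum>v\<in>V. b v) = 0"

definition pb_transshipment ::
  "'v set \<Rightarrow> 'e set \<Rightarrow> ('e \<Rightarrow> 'v) \<Rightarrow> ('e \<Rightarrow> 'v) \<Rightarrow> ('e \<Rightarrow> real) \<Rightarrow> real
    \<Rightarrow> ('v \<Rightarrow> real) \<Rightarrow> ('v \<Rightarrow> real) \<Rightarrow> ('e \<Rightarrow> real) \<Rightarrow> bool" where
  "pb_transshipment V A tail head beta r b p f \<longleftrightarrow>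
     (\<forall>a\<in>A. p (tail a) - p (head a) = beta a * (sgn (f a) * \<bar>f a\<bar> powr r)) \<and>
     (\<forall>v\<in>V. (\<Sum>a\<in>{a\<in>A. tail a = v}. f a) - (\<Sum>a\<in>{a\<in>A. head a = v}. f a) = b v)"

definition st_demand :: "'v \<Rightarrow> 'v \<Rightarrow> real \<Rightarrow> 'v \<Rightarrow> real" where
  "st_demand s t d = (\<lambda>v. d * ((if v = s then 1 else 0) - (if v = t then 1 else 0)))"

text \<open>Normalized potential p^N(b): minimum entry over V equal to 0 (values outside V
  fixed to 0 so that it is a unique function).\<close>
definition pot_N ::
  "'v set \<Rightarrow> 'e set \<Rightarrow> ('e \<Rightarrow> 'v) \<Rightarrow> ('e \<Rightarrow> 'v) \<Rightarrow> ('e \<Rightarrow> real) \<Rightarrow> real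
    \<Rightarrow> ('v \<Rightarrow> real) \<Rightarrow> ('v \<Rightarrow> real)" where
  "pot_N V A tail head beta r b = (THE p. (\<exists>f. pb_transshipment V A tail head beta r b p f) \<and>
       Min (p ` V) = 0 \<and> (\<forall>v. v \<notin> V \<longrightarrow> p v = 0))"

definition eff_resistance ::
  "'v set \<Rightarrow> 'e set \<Rightarrow> ('e \<Rightarrow> 'v) \<Rightarrow> ('e \<Rightarrow> 'v) \<Rightarrow> ('e \<Rightarrow> real) \<Rightarrow> real
    \<Rightarrow> 'v \<Rightarrow> 'v \<Rightarrow> real" where
  "eff_resistance V A tail head beta r s t =
     (let p = pot_N V A tail head beta r (st_demand s t 1) in p s - p t)"

definition eff_conductance ::
  "'v set \<Rightarrow> 'e set \<Rightarrow> ('e \<Rightarrow> 'v) \<Rightarrow> ('e \<Rightarrow> 'v) \<Rightarrow> ('e \<Rightarrow> real) \<Rightarrow> real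
    \<Rightarrow> 'v \<Rightarrow> 'v \<Rightarrow> real" where
  "eff_conductance V A tail head beta r s t = (eff_resistance V A tail head beta r s t) powr (- 1 / r)"

definition multipath :: "nat \<Rightarrow> 'e set \<Rightarrow> ('e \<Rightarrow> nat) \<Rightarrow> ('e \<Rightarrow> nat) \<Rightarrow> bool" where
  "multipath k A tail head \<longleftrightarrow>
     (\<forall>a\<in>A. \<exists>i\<in>{1..k}. (tail a = i - 1 \<and> head a = i) \<or> (tail a = i \<and> head a = i - 1))"

end

theory Submission
  imports Defs
begin

text \<open>Summing the arc relations against the flow gives the energy identity
  \<open>d (\<pi>\<^sub>s - \<pi>\<^sub>t) = \<Sum>\<^sub>a \<beta>\<^sub>a |f\<^sub>a|\<^bsup>r+1\<^esup>\<close>, so the potential drop \<open>D = \<pi>\<^sub>s - \<pi>\<^sub>t\<close> is positive.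
  Dividing the flow by \<open>d\<close> and the potential by \<open>d\<^sup>r\<close> yields the unit flow, and potentials
  of a transshipment are unique up to a constant (the map \<open>x \<mapsto> sgn x |x|\<^sup>r\<close> is strictly
  monotone), so \<open>R\<^sub>s\<^sub>,\<^sub>t = D / d\<^sup>r\<close> and \<open>U\<^sub>s\<^sub>,\<^sub>t = d / D\<^bsup>1/r\<^esup> \<ge> d / pibar\<^bsup>1/r\<^esup>\<close> because \<open>D \<le> pibar\<close>.\<close>

lemma sum_mult_by_endpoint:
  fixes f p :: "_ \<Rightarrow> 'b::comm_semiring_0"
  assumes "finite A" "finite V" "e ` A \<subseteq> V"
  shows "(\<Sum>a\<in>A. f a * p (e a)) = (\<Sum>v\<in>V. p v * (\<Sum>a\<in>{a\<in>A. e a = v}. f a))"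
proof -
  have "(\<Sum>a\<in>A. f a * p (e a)) = (\<Sum>v\<in>V. \<Sum>a\<in>{a\<in>A. e a = v}. f a * p (e a))"
    by (rule sum.group[OF assms, symmetric])
  also have "\<dots> = (\<Sum>v\<in>V. p v * (\<Sum>a\<in>{a\<in>A. e a = v}. f a))"
    by (intro sum.cong) (auto simp: sum_distrib_left mult.commute)
  finally show ?thesis .
qed

lemma sum_flow_mult_potential_drop:
  fixes f p b :: "_ \<Rightarrow> 'b::comm_ring"
  assumes "finite A" "finite V" "\<forall>a\<in>A. tail a \<in> V \<and> head a \<in> V"
    and "\<forall>v\<in>V. (\<Sum>a\<in>{a\<in>A. tail a = v}. f a) - (\<Sum>a\<in>{a\<in>A. head a = v}. f a) = b v"
  shows "(\<Sum>a\<in>A. f a * (p (tail a) - p (head a))) = (\<Sum>v\<in>V. p v * b v)"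
proof -
  have "(\<Sum>a\<in>A. f a * (p (tail a) - p (head a)))
      = (\<Sum>a\<in>A. f a * p (tail a)) - (\<Sum>a\<in>A. f a * p (head a))"
    by (simp add: right_diff_distrib sum_subtractf)
  also have "\<dots> = (\<Sum>v\<in>V. p v * ((\<Sum>a\<in>{a\<in>A. tail a = v}. f a) - (\<Sum>a\<in>{a\<in>A. head a = v}. f a)))"
    using assms(1-3) by (simp add: sum_mult_by_endpoint[of A V] image_subset_iff
        right_diff_distrib sum_subtractf)
  also have "\<dots> = (\<Sum>v\<in>V. p v * b v)"
    using assms(4) by simp
  finally show ?thesis .
qed

lemma sum_mult_st_demand:
  assumes "finite V" "s \<in> V" "t \<in> V"
  shows "(\<Sum>v\<in>V. p v * st_demand s t d v) = d * (p s - p t)"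
proof -
  have "(\<Sum>v\<in>V. p v * st_demand s t d v)
      = (\<Sum>v\<in>V. (if v = s then d * p s else 0) - (if v = t then d * p t else 0))"
    by (rule sum.cong) (simp_all add: st_demand_def algebra_simps)
  also have "\<dots> = d * p s - d * p t"
    using assms by (simp add: sum_subtractf)
  finally show ?thesis
    by (simp add: algebra_simps)
qed

definition signed_power :: "real \<Rightarrow> real \<Rightarrow> real" where
  "signed_power r x = sgn x * \<bar>x\<bar> powr r"

lemma pb_transshipment_iff_signed_power:
  "pb_transshipment V A tail head beta r b p f \<longleftrightarrow>
     (\<forall>a\<in>A. p (tail a) - p (head a) = beta a * signed_power r (f a)) \<and>
     (\<forall>v\<in>V. (\<Sum>a\<in>{a\<in>A. tail a = v}. f a) - (\<Sum>a\<in>{a\<in>A. head a = v}. f a) = b v)"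
  by (simp add: pb_transshipment_def signed_power_def)

lemma signed_power_strict_mono:
  assumes "r > 0"
  shows "strict_mono (signed_power r)"
proof
  fix x y :: real
  assume "x < y"
  consider "0 \<le> x" | "x < 0" "0 \<le> y" | "y < 0"
    by linarith
  then show "signed_power r x < signed_power r y"
  proof cases
    case 1
    then show ?thesis
      using \<open>x < y\<close> assms powr_less_mono2[of r x y] by (simp add: signed_power_def sgn_if)
  next
    case 2
    then have "(- x) powr r > 0" "y powr r \<ge> 0"
      by auto
    with 2 have "signed_power r x < 0" "signed_power r y \<ge> 0"
      by (simp_all add: signed_power_def sgn_if)
    then show ?thesis
      by linarith
  next
    case 3
    then show ?thesis
      using \<open>x < y\<close> assms powr_less_mono2[of r "-y" "-x"] by (simp add: signed_power_def sgn_if)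
  qed
qed

lemma signed_power_diff_mult_pos:
  assumes "r > 0" "x \<noteq> y"
  shows "(x - y) * (signed_power r x - signed_power r y) > 0"
  using assms strict_monoD[OF signed_power_strict_mono[OF \<open>r > 0\<close>], of x y]
    strict_monoD[OF signed_power_strict_mono[OF \<open>r > 0\<close>], of y x]
  by (cases "x < y") (auto simp: mult_neg_neg)

lemma signed_power_diff_mult_nonneg:
  assumes "r > 0"
  shows "(x - y) * (signed_power r x - signed_power r y) \<ge> 0"
  using signed_power_diff_mult_pos[OF assms, of x y] by (cases "x = y") auto

lemma signed_power_zero [simp]: "signed_power r 0 = 0"
  by (simp add: signed_power_def)

lemma pb_network_arc_invariant_const:
  assumes N: "pb_network V A tail head beta r"
    and arc: "\<And>a. a \<in> A \<Longrightarrow> g (tail a) = g (head a)"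
    and "u \<in> V" "v \<in> V"
  shows "g u = g v"
proof -
  let ?E = "{(tail a, head a) | a. a \<in> A} \<union> {(head a, tail a) | a. a \<in> A}"
  have "(u, v) \<in> ?E\<^sup>*"
    using N assms(3,4) unfolding pb_network_def by blast
  then show ?thesis
    by (induction rule: rtrancl_induct) (use arc in auto)
qed

lemma pb_transshipment_potential_unique:
  assumes N: "pb_network V A tail head beta r"
    and T1: "pb_transshipment V A tail head beta r b p1 f1"
    and T2: "pb_transshipment V A tail head beta r b p2 f2"
  obtains c where "\<And>v. v \<in> V \<Longrightarrow> p1 v = p2 v + c"
proof -
  define g where "g v = p1 v - p2 v" for v
  define h where "h a = f1 a - f2 a" for a
  have fin: "finite A" "finite V" and inV: "\<forall>a\<in>A. tail a \<in> V \<and> head a \<in> V"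
    and beta_pos: "\<And>a. a \<in> A \<Longrightarrow> beta a > 0" and "r > 0" and "V \<noteq> {}"
    using N unfolding pb_network_def by auto
  have arc: "g (tail a) - g (head a) = beta a * (signed_power r (f1 a) - signed_power r (f2 a))"
    if "a \<in> A" for a
    using T1 T2 that unfolding pb_transshipment_iff_signed_power g_def by (auto simp: algebra_simps)
  have conserved: "\<forall>v\<in>V. (\<Sum>a\<in>{a\<in>A. tail a = v}. h a) - (\<Sum>a\<in>{a\<in>A. head a = v}. h a) = 0"
  proof
    fix v assume "v \<in> V"
    then have "(\<Sum>a\<in>{a\<in>A. tail a = v}. f1 a) - (\<Sum>a\<in>{a\<in>A. head a = v}. f1 a)
        = (\<Sum>a\<in>{a\<in>A. tail a = v}. f2 a) - (\<Sum>a\<in>{a\<in>A. head a = v}. f2 a)"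
      using T1 T2 unfolding pb_transshipment_def by simp
    then show "(\<Sum>a\<in>{a\<in>A. tail a = v}. h a) - (\<Sum>a\<in>{a\<in>A. head a = v}. h a) = 0"
      unfolding h_def sum_subtractf by linarith
  qed
  have energy_zero: "(\<Sum>a\<in>A. h a * (g (tail a) - g (head a))) = 0"
    using sum_flow_mult_potential_drop[OF fin inV conserved] by simp
  have term_eq: "h a * (g (tail a) - g (head a))
      = beta a * ((f1 a - f2 a) * (signed_power r (f1 a) - signed_power r (f2 a)))" if "a \<in> A" for a
    using arc[OF that] unfolding h_def by simp
  have term_nonneg: "h a * (g (tail a) - g (head a)) \<ge> 0" if "a \<in> A" for a
    unfolding term_eq[OF that]
    using beta_pos[OF that] signed_power_diff_mult_nonneg[OF \<open>r > 0\<close>] by simp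
  have "g (tail a) = g (head a)" if "a \<in> A" for a
  proof (rule ccontr)
    assume "g (tail a) \<noteq> g (head a)"
    then have "f1 a \<noteq> f2 a"
      using arc[OF \<open>a \<in> A\<close>] by auto
    then have "h a * (g (tail a) - g (head a)) > 0"
      unfolding term_eq[OF \<open>a \<in> A\<close>]
      using beta_pos[OF \<open>a \<in> A\<close>] signed_power_diff_mult_pos[OF \<open>r > 0\<close>] by simp
    then have "(\<Sum>a\<in>A. h a * (g (tail a) - g (head a))) > 0"
      using term_nonneg by (intro sum_pos2[OF fin(1) \<open>a \<in> A\<close>])
    then show False
      using energy_zero by simp
  qed
  then have g_const: "g v = g v0" if "v \<in> V" "v0 \<in> V" for v v0
    using pb_network_arc_invariant_const[OF N] that by blast
  obtain v0 where "v0 \<in> V"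
    using \<open>V \<noteq> {}\<close> by blast
  show thesis
  proof (rule that)
    fix v
    assume "v \<in> V"
    then show "p1 v = p2 v + g v0"
      using g_const[OF _ \<open>v0 \<in> V\<close>] unfolding g_def by force
  qed
qed

lemma pot_N_eqI:
  assumes N: "pb_network V A tail head beta r"
    and T: "pb_transshipment V A tail head beta r b q g"
    and "Min (q ` V) = 0" and "\<And>v. v \<notin> V \<Longrightarrow> q v = 0"
  shows "pot_N V A tail head beta r b = q"
  unfolding pot_N_def
proof (rule the_equality)
  show "(\<exists>f. pb_transshipment V A tail head beta r b q f) \<and> Min (q ` V) = 0 \<and> (\<forall>v. v \<notin> V \<longrightarrow> q v = 0)"
    using assms by blast
next
  fix p
  assume p: "(\<exists>f. pb_transshipment V A tail head beta r b p f) \<and> Min (p ` V) = 0 \<and> (\<forall>v. v \<notin> V \<longrightarrow> p v = 0)"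
  then obtain f where "pb_transshipment V A tail head beta r b p f"
    by blast
  then obtain c where c: "\<And>v. v \<in> V \<Longrightarrow> p v = q v + c"
    using pb_transshipment_potential_unique[OF N _ T] by blast
  have "finite V" "V \<noteq> {}"
    using N unfolding pb_network_def by auto
  have "p ` V = (\<lambda>v. q v + c) ` V"
    using c by auto
  then have "Min (p ` V) = Min (q ` V) + c"
    using Min_add_commute[OF \<open>finite V\<close> \<open>V \<noteq> {}\<close>] by simp
  then have "c = 0"
    using p assms(3) by simp
  then show "p = q"
    using c p assms(4) by (intro ext) (metis add.right_neutral)
qed

lemma pot_N_eq_potential_minus_Min:
  assumes N: "pb_network V A tail head beta r"
    and T: "pb_transshipment V A tail head beta r b p f"
  shows "pot_N V A tail head beta r b = (\<lambda>v. if v \<in> V then p v - Min (p ` V) else 0)"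
    (is "_ = ?q")
proof (rule pot_N_eqI[OF N])
  have "finite V" "V \<noteq> {}" and inV: "\<forall>a\<in>A. tail a \<in> V \<and> head a \<in> V"
    using N unfolding pb_network_def by auto
  show "pb_transshipment V A tail head beta r b ?q f"
    using T inV unfolding pb_transshipment_def by simp
  have "?q ` V = (\<lambda>v. p v + - Min (p ` V)) ` V"
    by auto
  also have "Min \<dots> = Min (p ` V) + - Min (p ` V)"
    by (rule Min_add_commute[OF \<open>finite V\<close> \<open>V \<noteq> {}\<close>])
  finally show "Min (?q ` V) = 0"
    by simp
qed simp

lemma signed_power_divide:
  assumes "c > 0"
  shows "signed_power r (x / c) = signed_power r x / c powr r"
  using assms by (simp add: signed_power_def sgn_divide abs_divide powr_divide)

lemma pb_transshipment_scale:
  assumes T: "pb_transshipment V A tail head beta r b p f" and "c > 0"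
  shows "pb_transshipment V A tail head beta r (\<lambda>v. b v / c) (\<lambda>v. p v / c powr r) (\<lambda>a. f a / c)"
  using T \<open>c > 0\<close> unfolding pb_transshipment_iff_signed_power
  by (simp add: signed_power_divide diff_divide_distrib[symmetric] sum_divide_distrib[symmetric])

lemma st_demand_divide:
  assumes "d \<noteq> 0"
  shows "(\<lambda>v. st_demand s t d v / d) = st_demand s t 1"
  using assms by (simp add: st_demand_def)

lemma eff_resistance_st_flow:
  assumes N: "pb_network V A tail head beta r" and "s \<in> V" "t \<in> V"
    and T: "pb_transshipment V A tail head beta r (st_demand s t d) p f" and "d > 0"
  shows "eff_resistance V A tail head beta r s t = (p s - p t) / d powr r"
proof -
  have "pb_transshipment V A tail head beta r (st_demand s t 1) (\<lambda>v. p v / d powr r) (\<lambda>a. f a / d)"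
    using pb_transshipment_scale[OF T \<open>d > 0\<close>] st_demand_divide[of d s t] \<open>d > 0\<close> by simp
  then have "pot_N V A tail head beta r (st_demand s t 1)
      = (\<lambda>v. if v \<in> V then p v / d powr r - Min ((\<lambda>v. p v / d powr r) ` V) else 0)"
    by (rule pot_N_eq_potential_minus_Min[OF N])
  then show ?thesis
    using assms(2,3) unfolding eff_resistance_def by (simp add: diff_divide_distrib)
qed

lemma st_flow_potential_drop_pos:
  assumes N: "pb_network V A tail head beta r" and "s \<in> V" "t \<in> V" "s \<noteq> t"
    and T: "pb_transshipment V A tail head beta r (st_demand s t d) p f" and "d > 0"
  shows "p s - p t > 0"
proof -
  have fin: "finite A" "finite V" and inV: "\<forall>a\<in>A. tail a \<in> V \<and> head a \<in> V"
    and beta_pos: "\<And>a. a \<in> A \<Longrightarrow> beta a > 0" and "r > 0"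
    using N unfolding pb_network_def by auto
  have arc: "\<forall>a\<in>A. p (tail a) - p (head a) = beta a * signed_power r (f a)"
    and conserved: "\<forall>v\<in>V. (\<Sum>a\<in>{a\<in>A. tail a = v}. f a) - (\<Sum>a\<in>{a\<in>A. head a = v}. f a)
                      = st_demand s t d v"
    using T unfolding pb_transshipment_iff_signed_power by auto
  have energy: "(\<Sum>a\<in>A. f a * (p (tail a) - p (head a))) = d * (p s - p t)"
    using sum_flow_mult_potential_drop[OF fin inV conserved] sum_mult_st_demand[OF fin(2) assms(2,3)]
    by simp
  have term_eq: "f a * (p (tail a) - p (head a)) = beta a * (f a * signed_power r (f a))" if "a \<in> A" for a
    using arc that by simp
  have "\<exists>a\<in>A. f a \<noteq> 0"
  proof (rule ccontr)
    assume "\<not> (\<exists>a\<in>A. f a \<noteq> 0)"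
    then have "(\<Sum>a\<in>{a\<in>A. tail a = s}. f a) = 0" "(\<Sum>a\<in>{a\<in>A. head a = s}. f a) = 0"
      by (auto intro!: sum.neutral)
    then show False
      using conserved[rule_format, OF \<open>s \<in> V\<close>] \<open>s \<noteq> t\<close> \<open>d > 0\<close> by (simp add: st_demand_def)
  qed
  then obtain a where "a \<in> A" "f a \<noteq> 0"
    by blast
  then have "f a * signed_power r (f a) > 0"
    using signed_power_diff_mult_pos[OF \<open>r > 0\<close>, of "f a" 0] by simp
  then have "f a * (p (tail a) - p (head a)) > 0"
    unfolding term_eq[OF \<open>a \<in> A\<close>] using beta_pos[OF \<open>a \<in> A\<close>] by simp
  moreover have "f b * (p (tail b) - p (head b)) \<ge> 0" if "b \<in> A" for b
    unfolding term_eq[OF that]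
    using beta_pos[OF that] signed_power_diff_mult_nonneg[OF \<open>r > 0\<close>, of "f b" 0] by simp
  ultimately have "(\<Sum>a\<in>A. f a * (p (tail a) - p (head a))) > 0"
    by (intro sum_pos2[OF fin(1) \<open>a \<in> A\<close>])
  then show ?thesis
    using energy \<open>d > 0\<close> by (simp add: zero_less_mult_iff)
qed

lemma eff_conductance_st_flow:
  assumes N: "pb_network V A tail head beta r" and "s \<in> V" "t \<in> V" "s \<noteq> t"
    and T: "pb_transshipment V A tail head beta r (st_demand s t d) p f" and "d > 0"
  shows "eff_conductance V A tail head beta r s t = d / (p s - p t) powr (1 / r)"
proof -
  have "r > 0"
    using N unfolding pb_network_def by auto
  have "p s - p t > 0"
    using st_flow_potential_drop_pos[OF assms] .
  with \<open>r > 0\<close> \<open>d > 0\<close> show ?thesis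
    unfolding eff_conductance_def eff_resistance_st_flow[OF N assms(2,3) T \<open>d > 0\<close>]
    by (simp add: powr_minus_divide powr_divide powr_powr)
qed

theorem lemma3:
  fixes k :: nat and A :: "'e set" and tail head :: "'e \<Rightarrow> nat" and beta :: "'e \<Rightarrow> real"
    and r d pibar :: real and pot :: "nat \<Rightarrow> real" and f :: "'e \<Rightarrow> real"
  assumes "r > 0" and "k \<ge> 1"
    and "pb_network {0..k} A tail head beta r"
    and "multipath k A tail head"
    and "pb_transshipment {0..k} A tail head beta r (st_demand 0 k d) pot f"
    and "d > 0"
    and "pibar > 0"
    and "\<forall>v\<in>{0..k}. 0 \<le> pot v \<and> pot v \<le> pibar"
  shows "eff_conductance {0..k} A tail head beta r 0 k \<ge> d / (pibar powr (1 / r))"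
proof -
  have ends: "0 \<in> {0..k}" "k \<in> {0..k}" "0 \<noteq> k"
    using \<open>k \<ge> 1\<close> by auto
  have drop_pos: "pot 0 - pot k > 0"
    using st_flow_potential_drop_pos[OF assms(3) ends assms(5,6)] .
  have "pot 0 \<le> pibar" "0 \<le> pot k"
    using assms(8) by auto
  then have "pot 0 - pot k \<le> pibar"
    by linarith
  then have "(pot 0 - pot k) powr (1 / r) \<le> pibar powr (1 / r)"
    using drop_pos \<open>r > 0\<close> by (intro powr_mono2) auto
  then have "d / pibar powr (1 / r) \<le> d / (pot 0 - pot k) powr (1 / r)"
    using drop_pos \<open>d > 0\<close> \<open>pibar > 0\<close> by (intro divide_left_mono mult_pos_pos) auto
  then show ?thesis
    unfolding eff_conductance_st_flow[OF assms(3) ends assms(5,6)] .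
qed

end
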